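(* Let $G_1=(V,E_1,L)$ and $G_2=(V,E_2,L)$ be hypergraphs with loops with the same node set and the same loops (with the same signs), and with $E_1\subseteq E_2$. Then a formulation for $\mathrm{PP}(G_2)$ is an extended formulation for $\mathrm{PP}(G_1)$; that is, $\mathrm{PP}(G_1)$ equals the projection of $\mathrm{PP}(G_2)$ onto the coordinates indexed by $V\cup E_1\cup L$.
   Context: A hypergraph with loops is $G=(V,E,L)$: $V$ a finite node set, $E$ a set of subsets of $V$ of cardinality at least two, $L$ a set of loops $\{i,i\}$, $i\in V$, partitioned as $L=L^-\cup L^+$ (minus/plus loops). $\mathrm{PP}(G):=\mathrm{conv}\{z\in\mathbb{R}^{V\cup E\cup L}: z_{ii}\ge z_i^2\ \forall\{i,i\}\in L^+,\ z_{ii}\le z_i^2\ \forall \{i,i\}\in L^-,\ z_e=\prod_{i\in e}z_i\ \forall e\in E,\ z_i\in[0,1]\ \forall i\in V\}$. *)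

theory Defs
  imports "HOL-Analysis.Analysis" "HOL-Library.Function_Algebras"
begin

text \<open>Pointwise real vector space structure on functions, so that the library
  notion \<open>convex hull\<close> applies to points of R^I represented as functions I \<Rightarrow> real.\<close>

instantiation "fun" :: (type, real_vector) real_vector
begin
definition scaleR_fun :: "real \<Rightarrow> ('a \<Rightarrow> 'b) \<Rightarrow> 'a \<Rightarrow> 'b"
  where "scaleR_fun r f = (\<lambda>x. r *\<^sub>R f x)"
instance
  by standard (auto simp: scaleR_fun_def fun_eq_iff scaleR_add_right scaleR_add_left)
end

text \<open>Coordinate indices: nodes i, edges e, loops {i,i} (identified with i).\<close>
datatype 'a idx = Node 'a | Edge "'a set" | Loop 'a

definition hypergraph_with_loops :: "'a set \<Rightarrow> 'a set set \<Rightarrow> 'a set \<Rightarrow> 'a set \<Rightarrow> bool" where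
  "hypergraph_with_loops V E Lminus Lplus \<longleftrightarrow>
     finite V \<and> (\<forall>e\<in>E. e \<subseteq> V \<and> card e \<ge> 2) \<and>
     Lminus \<subseteq> V \<and> Lplus \<subseteq> V \<and> Lminus \<inter> Lplus = {}"

definition coords :: "'a set \<Rightarrow> 'a set set \<Rightarrow> 'a set \<Rightarrow> 'a set \<Rightarrow> 'a idx set" where
  "coords V E Lminus Lplus = Node ` V \<union> Edge ` E \<union> Loop ` (Lminus \<union> Lplus)"

definition PP_points :: "'a set \<Rightarrow> 'a set set \<Rightarrow> 'a set \<Rightarrow> 'a set \<Rightarrow> ('a idx \<Rightarrow> real) set" where
  "PP_points V E Lminus Lplus =
    {z. (\<forall>c. c \<notin> coords V E Lminus Lplus \<longrightarrow> z c = 0) \<and>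
        (\<forall>i\<in>Lplus. z (Loop i) \<ge> (z (Node i))\<^sup>2) \<and>
        (\<forall>i\<in>Lminus. z (Loop i) \<le> (z (Node i))\<^sup>2) \<and>
        (\<forall>e\<in>E. z (Edge e) = (\<Prod>i\<in>e. z (Node i))) \<and>
        (\<forall>i\<in>V. 0 \<le> z (Node i) \<and> z (Node i) \<le> 1)}"

definition PP :: "'a set \<Rightarrow> 'a set set \<Rightarrow> 'a set \<Rightarrow> 'a set \<Rightarrow> ('a idx \<Rightarrow> real) set" where
  "PP V E Lminus Lplus = convex hull (PP_points V E Lminus Lplus)"

definition proj :: "'i set \<Rightarrow> ('i \<Rightarrow> real) \<Rightarrow> ('i \<Rightarrow> real)" where
  "proj I z = (\<lambda>c. if c \<in> I then z c else 0)"

end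

theory Submission
  imports Defs
begin

text \<open>Projection is linear, so it commutes with taking convex hulls; hence it suffices to show
  that the projection maps the generating points of \<open>PP(G\<^sub>2)\<close> onto those of \<open>PP(G\<^sub>1)\<close>.
  A generating point of \<open>PP(G\<^sub>2)\<close> keeps all node and loop coordinates under the projection and
  the product constraints of the edges in \<open>E\<^sub>1 \<subseteq> E\<^sub>2\<close>; conversely a generating point of
  \<open>PP(G\<^sub>1)\<close> lifts by filling in the edge coordinates of \<open>E\<^sub>2\<close> with the corresponding products.\<close>

lemma linear_proj: "linear (proj I)"
  by (rule linearI) (auto simp: proj_def plus_fun_def scaleR_fun_def fun_eq_iff)

lemma proj_coords_apply:
  assumes "z \<in> PP_points V E Lminus Lplus" and "c \<notin> Edge ` (E - E')"
  shows "proj (coords V E' Lminus Lplus) z c = z c"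
  using assms unfolding proj_def PP_points_def coords_def by (cases c) auto

lemma proj_mem_PP_points:
  assumes z: "z \<in> PP_points V E2 Lminus Lplus" and "E1 \<subseteq> E2"
  shows "proj (coords V E1 Lminus Lplus) z \<in> PP_points V E1 Lminus Lplus"
proof -
  let ?w = "proj (coords V E1 Lminus Lplus) z"
  have node: "?w (Node i) = z (Node i)" and loop: "?w (Loop i) = z (Loop i)" for i
    using proj_coords_apply[OF z] by auto
  have edge: "?w (Edge e) = z (Edge e)" if "e \<in> E1" for e
    using proj_coords_apply[OF z] that by auto
  show ?thesis
    using z \<open>E1 \<subseteq> E2\<close> unfolding PP_points_def
    by (auto simp: node loop edge) (simp add: proj_def)
qed

definition lift_products :: "'a set set \<Rightarrow> ('a idx \<Rightarrow> real) \<Rightarrow> 'a idx \<Rightarrow> real" where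
  "lift_products E w =
     (\<lambda>c. case c of Edge e \<Rightarrow> if e \<in> E then \<Prod>i\<in>e. w (Node i) else 0 | _ \<Rightarrow> w c)"

lemma lift_products_mem_PP_points:
  assumes "w \<in> PP_points V E1 Lminus Lplus"
  shows "lift_products E2 w \<in> PP_points V E2 Lminus Lplus"
proof -
  have "lift_products E2 w c = 0" if "c \<notin> coords V E2 Lminus Lplus" for c
    using assms that unfolding PP_points_def coords_def lift_products_def
    by (cases c) auto
  then show ?thesis
    using assms unfolding PP_points_def by (simp add: lift_products_def)
qed

lemma proj_lift_products:
  assumes "w \<in> PP_points V E1 Lminus Lplus" and "E1 \<subseteq> E2"
  shows "proj (coords V E1 Lminus Lplus) (lift_products E2 w) = w"
proof
  fix c
  show "proj (coords V E1 Lminus Lplus) (lift_products E2 w) c = w c"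
    using assms unfolding PP_points_def proj_def coords_def lift_products_def
    by (cases c) auto
qed

lemma proj_image_PP_points:
  assumes "E1 \<subseteq> E2"
  shows "proj (coords V E1 Lminus Lplus) ` PP_points V E2 Lminus Lplus = PP_points V E1 Lminus Lplus"
proof
  show "proj (coords V E1 Lminus Lplus) ` PP_points V E2 Lminus Lplus \<subseteq> PP_points V E1 Lminus Lplus"
    using proj_mem_PP_points[OF _ assms] by blast
  show "PP_points V E1 Lminus Lplus \<subseteq> proj (coords V E1 Lminus Lplus) ` PP_points V E2 Lminus Lplus"
    using proj_lift_products[OF _ assms] lift_products_mem_PP_points by (metis image_eqI subsetI)
qed

theorem lemma3:
  fixes V :: "'a set" and E1 E2 :: "'a set set" and Lminus Lplus :: "'a set"
  assumes "hypergraph_with_loops V E1 Lminus Lplus"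
    and "hypergraph_with_loops V E2 Lminus Lplus"
    and "E1 \<subseteq> E2"
  shows "PP V E1 Lminus Lplus = proj (coords V E1 Lminus Lplus) ` PP V E2 Lminus Lplus"
  unfolding PP_def convex_hull_linear_image[OF linear_proj]
  using proj_image_PP_points[OF \<open>E1 \<subseteq> E2\<close>] by simp

end
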